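(* Let $n\ge 2$ and let $A,B$ be positive words (words in the letters $\sigma_1,\dots,\sigma_{n-1},x_1,\dots,x_{n-1}$), and let $i,k\in\{1,\dots,n-1\}$. (1) Suppose $\sigma_i A\doteq \sigma_k B$. If $k=i$ then $A\doteq B$. If $|k-i|=1$ then there is a positive word $Z$ with $A\doteq \sigma_k\sigma_i Z$ and $B\doteq \sigma_i\sigma_k Z$. If $|k-i|\ge 2$ then there is a positive word $Z$ with $A\doteq \sigma_k Z$ and $B\doteq\sigma_i Z$. (2) Suppose $\sigma_i A\doteq x_k B$. If $|k-i|=1$ then there is a positive word $Z$ with $A\doteq \sigma_k x_i Z$ and $B\doteq \sigma_i\sigma_k Z$. If $|k-i|\ne 1$ then there is a positive word $Z$ with $A\doteq x_k Z$ and $B\doteq \sigma_i Z$. (3) Suppose $x_i A\doteq x_k B$. If $k=i$ then $A\doteq B$. If $|k-i|\ge 2$ then there is a positive word $Z$ with $A\doteq x_k Z$ and $B\doteq x_i Z$. The case $|k-i|=1$ is impossible, i.e. $x_iA\doteq x_kB$ never holds when $|k-i|=1$. The same statements hold for multiples on the right, i.e. with all words written in reverse order: e.g. if $A\sigma_i\doteq B\sigma_k$ with $|k-i|=1$ then $A\doteq Z\sigma_i\sigma_k$, $B\doteq Z\sigma_k\sigma_i$; if $A\sigma_i\doteq Bx_k$ with $|k-i|=1$ then $A\doteq Z x_i\sigma_k$, $B\doteq Z\sigma_k\sigma_i$; if $Ax_i\doteq Bx_k$ with $|k-i|=1$ this is impossible; and analogously in the remaining cases.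
   Context: Fix $n\ge 2$. The positive singular braid monoid $SB_n^+$ is the monoid with generators $\sigma_1,\dots,\sigma_{n-1},x_1,\dots,x_{n-1}$ and relations: $\sigma_i\sigma_j=\sigma_j\sigma_i$ and $x_ix_j=x_jx_i$ if $|i-j|>1$; $x_i\sigma_j=\sigma_jx_i$ if $|i-j|\ne 1$; $\sigma_i\sigma_{i+1}\sigma_i=\sigma_{i+1}\sigma_i\sigma_{i+1}$; $\sigma_i\sigma_{i+1}x_i=x_{i+1}\sigma_i\sigma_{i+1}$; $\sigma_{i+1}\sigma_ix_{i+1}=x_i\sigma_{i+1}\sigma_i$ (for all indices for which these make sense). A positive word is a word in the letters $\sigma_i,x_i$ (possibly empty). For positive words $A,B$, $A\doteq B$ ("positively equal") means $A$ and $B$ represent the same element of $SB_n^+$. *)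

theory Defs
  imports Main
begin

text \<open>Letters of the positive singular braid monoid: S i is sigma_i, X i is x_i.\<close>
datatype letter = S nat | X nat

definition valid_letter :: "nat \<Rightarrow> letter \<Rightarrow> bool" where
  "valid_letter n a = (case a of S i \<Rightarrow> 1 \<le> i \<and> i < n | X i \<Rightarrow> 1 \<le> i \<and> i < n)"

definition pword :: "nat \<Rightarrow> letter list \<Rightarrow> bool" where
  "pword n w = (\<forall>a\<in>set w. valid_letter n a)"

definition rels :: "nat \<Rightarrow> (letter list \<times> letter list) set" where
  "rels n =
     {([S i, S j], [S j, S i]) | i j. 1 \<le> i \<and> i < n \<and> 1 \<le> j \<and> j < n \<and> \<bar>int i - int j\<bar> > 1}
   \<union> {([X i, X j], [X j, X i]) | i j. 1 \<le> i \<and> i < n \<and> 1 \<le> j \<and> j < n \<and> \<bar>int i - int j\<bar> > 1}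
   \<union> {([X i, S j], [S j, X i]) | i j. 1 \<le> i \<and> i < n \<and> 1 \<le> j \<and> j < n \<and> \<bar>int i - int j\<bar> \<noteq> 1}
   \<union> {([S i, S (i+1), S i], [S (i+1), S i, S (i+1)]) | i. 1 \<le> i \<and> i + 1 < n}
   \<union> {([S i, S (i+1), X i], [X (i+1), S i, S (i+1)]) | i. 1 \<le> i \<and> i + 1 < n}
   \<union> {([S (i+1), S i, X (i+1)], [X i, S (i+1), S i]) | i. 1 \<le> i \<and> i + 1 < n}"

definition step :: "nat \<Rightarrow> (letter list \<times> letter list) set" where
  "step n = {(u @ l @ v, u @ r @ v) | u l r v. (l, r) \<in> rels n}"

definition peq :: "nat \<Rightarrow> letter list \<Rightarrow> letter list \<Rightarrow> bool" where
  "peq n A B = ((A, B) \<in> (step n \<union> (step n)\<inverse>)\<^sup>*)"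

end

theory Submission
  imports Defs
begin

(* The defining relations of SB_n^+ have the form a u = b u', one for each pair of distinct
   letters a, b, where u and u' depend only on a and b (the complements). By Dehornoy's theory of
   word reversing, a monoid given by such a complemented presentation is left cancellative, and
   every equality a A = b B factors as A = u Z, B = u' Z through the complement, as soon as the
   cube condition holds for every triple of letters. Here the cube condition is checked by running
   the reversing algorithm with symbolic indices. The factorization is then proved by induction
   on the length of A: along a chain of elementary moves from a A to b B, a move behind the first
   letter keeps it, a move at the front is itself a complement relation, and two consecutive
   factorizations are composed using the cube condition. The statements about right multiples
   follow by reversing all words, which maps the set of relations to itself. *)

section \<open>Positive equality as a congruence\<close>


lemma pword_simps [simp]:
  "pword n []"
  "pword n (a # A) \<longleftrightarrow> valid_letter n a \<and> pword n A"
  "pword n (A @ B) \<longleftrightarrow> pword n A \<and> pword n B"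
  "pword n (rev A) \<longleftrightarrow> pword n A"
  by (auto simp: pword_def)

lemma equivclp_map:
  assumes "\<And>x y. r x y \<Longrightarrow> equivclp r (f x) (f y)" and "equivclp r a b"
  shows "equivclp r (f a) (f b)"
  using assms(2)
proof induction
  case (step y z)
  from step(2) have "equivclp r (f y) (f z)"
    by (elim disjE) (auto intro: assms(1) equivclp_sym[OF assms(1)])
  with step(3) show ?case
    by (rule equivclp_trans)
qed simp

lemma equivclp_invariant:
  assumes "\<And>x y. r x y \<Longrightarrow> g x = g y" and "equivclp r a b"
  shows "g a = g b"
  using assms(2) by induction (auto dest: assms(1))

lemma peq_eq_equivclp: "peq n = equivclp (\<lambda>u v. (u, v) \<in> step n)"
proof -
  have "step n \<union> (step n)\<inverse> = {(u, v). (u, v) \<in> step n \<or> (v, u) \<in> step n}"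
    by auto
  then show ?thesis
    by (simp add: fun_eq_iff peq_def equivclp_def symclp_def rtranclp_rtrancl_eq)
qed

lemma peq_refl [simp]: "peq n A A"
  by (simp add: peq_eq_equivclp)

lemma peq_sym [sym]: "peq n A B \<Longrightarrow> peq n B A"
  by (simp add: peq_eq_equivclp equivclp_sym)

lemma peq_trans [trans]: "peq n A B \<Longrightarrow> peq n B C \<Longrightarrow> peq n A C"
  unfolding peq_eq_equivclp by (rule equivclp_trans)

lemma rels_imp_peq: "(l, r) \<in> rels n \<Longrightarrow> peq n l r"
proof -
  assume "(l, r) \<in> rels n"
  then have "([] @ l @ [], [] @ r @ []) \<in> step n"
    unfolding step_def by blast
  then show ?thesis
    by (simp add: peq_eq_equivclp r_into_equivclp)
qed

lemma step_in_context: "(A, B) \<in> step n \<Longrightarrow> (u @ A @ v, u @ B @ v) \<in> step n"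
proof -
  assume "(A, B) \<in> step n"
  then obtain u' l r v' where "A = u' @ l @ v'" "B = u' @ r @ v'" "(l, r) \<in> rels n"
    unfolding step_def by blast
  then have "((u @ u') @ l @ (v' @ v), (u @ u') @ r @ (v' @ v)) \<in> step n"
    unfolding step_def by blast
  then show ?thesis
    using \<open>A = _\<close> \<open>B = _\<close> by simp
qed

lemma peq_in_context: "peq n A B \<Longrightarrow> peq n (u @ A @ v) (u @ B @ v)"
  unfolding peq_eq_equivclp
  by (erule equivclp_map[where f = "\<lambda>x. u @ x @ v", rotated]) (auto intro: step_in_context)

lemma peq_append:
  assumes "peq n A A'" and "peq n B B'"
  shows "peq n (A @ B) (A' @ B')"
proof -
  have "peq n (A @ B) (A' @ B)"
    using peq_in_context[OF assms(1), of "[]" B] by simp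
  also have "peq n (A' @ B) (A' @ B')"
    using peq_in_context[OF assms(2), of A' "[]"] by simp
  finally show ?thesis .
qed

lemma rels_length: "(l, r) \<in> rels n \<Longrightarrow> length l = length r"
  unfolding rels_def by auto

lemma rels_pword: "(l, r) \<in> rels n \<Longrightarrow> pword n l \<and> pword n r"
  unfolding rels_def by (auto simp: valid_letter_def)

lemma peq_length: "peq n A B \<Longrightarrow> length A = length B"
  unfolding peq_eq_equivclp
  by (erule equivclp_invariant[where g = length, rotated]) (auto simp: step_def dest: rels_length)

lemma peq_pword: "peq n A B \<Longrightarrow> pword n A = pword n B"
  unfolding peq_eq_equivclp
  by (erule equivclp_invariant[where g = "pword n", rotated]) (auto simp: step_def dest: rels_pword)

lemma rels_rev: "(l, r) \<in> rels n \<Longrightarrow> (rev l, rev r) \<in> rels n \<or> (rev r, rev l) \<in> rels n"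
  unfolding rels_def by auto

lemma step_rev: "(A, B) \<in> step n \<Longrightarrow> (rev A, rev B) \<in> step n \<or> (rev B, rev A) \<in> step n"
proof -
  assume "(A, B) \<in> step n"
  then obtain u l r v where AB: "A = u @ l @ v" "B = u @ r @ v" and lr: "(l, r) \<in> rels n"
    unfolding step_def by blast
  have "(rev v @ l' @ rev u, rev v @ r' @ rev u) \<in> step n" if "(l', r') \<in> rels n" for l' r'
    using that unfolding step_def by blast
  with rels_rev[OF lr] show ?thesis
    unfolding AB by auto
qed

lemma peq_rev: "peq n A B \<Longrightarrow> peq n (rev A) (rev B)"
  unfolding peq_eq_equivclp
  by (erule equivclp_map[where f = rev, rotated]) (auto dest: step_rev)

section \<open>Complements\<close>

definition adjacent :: "nat \<Rightarrow> nat \<Rightarrow> bool" where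
  "adjacent i j \<longleftrightarrow> i + 1 = j \<or> j + 1 = i"

(* complement a b = Some u and complement b a = Some u' encode the relation a u = b u';
   None marks the pairs x_i, x_(i+1) that have no common multiple. *)
fun complement :: "letter \<Rightarrow> letter \<Rightarrow> letter list option" where
  "complement (S i) (S j) =
     (if i = j then Some [] else if adjacent i j then Some [S j, S i] else Some [S j])"
| "complement (X i) (X j) =
     (if i = j then Some [] else if adjacent i j then None else Some [X j])"
| "complement (S i) (X j) = (if adjacent i j then Some [S j, X i] else Some [X j])"
| "complement (X i) (S j) = (if adjacent i j then Some [S j, S i] else Some [S j])"

lemma complement_self [simp]: "complement a a = Some []"
  by (cases a) (auto simp: adjacent_def)

lemma pword_complement:
  "valid_letter n a \<Longrightarrow> valid_letter n b \<Longrightarrow> complement a b = Some u \<Longrightarrow> pword n u"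
  by (cases a; cases b) (auto simp: adjacent_def valid_letter_def split: if_splits)

lemma complement_in_rels:
  assumes "valid_letter n a" "valid_letter n b" "a \<noteq> b"
    and "complement a b = Some u" "complement b a = Some u'"
  shows "(a # u, b # u') \<in> rels n \<or> (b # u', a # u) \<in> rels n"
  using assms unfolding rels_def
  by (cases a; cases b) (auto simp: adjacent_def valid_letter_def split: if_splits)

lemma peq_complement:
  assumes "valid_letter n a" "valid_letter n b"
    and "complement a b = Some u" "complement b a = Some u'"
  shows "peq n (a # u) (b # u')"
proof (cases "a = b")
  case True
  then show ?thesis
    using assms(3,4) by simp
next
  case False
  from complement_in_rels[OF assms(1,2) False assms(3,4)] show ?thesis
    by (elim disjE) (auto dest: rels_imp_peq peq_sym)
qed

lemma rels_complement:
  "(l, r) \<in> rels n \<Longrightarrow>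
     \<exists>a b u u'. l = a # u \<and> r = b # u' \<and> complement a b = Some u \<and> complement b a = Some u'"
  unfolding rels_def by (auto simp: adjacent_def)

section \<open>Word reversing\<close>

(* right_reverse f p q = Reversed q' p' says that the signed word p^-1 q reverses to q' p'^-1 by
   repeatedly replacing a^-1 b with (complement a b) (complement b a)^-1, within recursion depth f;
   hence p q' = q p'. *)
datatype reversal = Reversed "letter list" "letter list" | Clash | Out_of_fuel

fun right_reverse :: "nat \<Rightarrow> letter list \<Rightarrow> letter list \<Rightarrow> reversal" where
  "right_reverse 0 p q = Out_of_fuel"
| "right_reverse (Suc f) [] q = Reversed q []"
| "right_reverse (Suc f) p [] = Reversed [] p"
| "right_reverse (Suc f) (a # p) (b # q) =
     (case (complement a b, complement b a) of
        (Some u, Some u') \<Rightarrow>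
          (case right_reverse f u' q of
             Reversed q1 u1 \<Rightarrow>
               (case right_reverse f p (u @ q1) of
                  Reversed q2 p2 \<Rightarrow> Reversed q2 (u1 @ p2)
                | r \<Rightarrow> r)
           | r \<Rightarrow> r)
      | _ \<Rightarrow> Clash)"

lemma right_reverse_sound:
  "right_reverse f p q = Reversed q' p' \<Longrightarrow> pword n p \<Longrightarrow> pword n q \<Longrightarrow>
     peq n (p @ q') (q @ p') \<and> pword n q' \<and> pword n p'"
proof (induction f p q arbitrary: q' p' rule: right_reverse.induct)
  case (4 f a p b q)
  obtain u u' q1 u1 p2 where
    cab: "complement a b = Some u" and cba: "complement b a = Some u'"
    and r1: "right_reverse f u' q = Reversed q1 u1"
    and r2: "right_reverse f p (u @ q1) = Reversed q' p2" and p': "p' = u1 @ p2"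
    using "4.prems"(1) by (auto split: option.splits reversal.splits)
  have u: "pword n u" "pword n u'"
    using pword_complement cab cba "4.prems"(2,3) by auto
  have IH1: "peq n (u' @ q1) (q @ u1)" "pword n q1" "pword n u1"
    using "4.IH"(1)[OF _ cab cba r1] u "4.prems"(3) by auto
  have IH2: "peq n (p @ q') (u @ q1 @ p2)" "pword n q'" "pword n p2"
    using "4.IH"(2)[OF _ cab cba r1 r2] u IH1 "4.prems"(2) by auto
  have "peq n (a # p @ q') (a # u @ q1 @ p2)"
    using peq_in_context[OF IH2(1), of "[a]" "[]"] by simp
  also have "peq n (a # u @ q1 @ p2) (b # u' @ q1 @ p2)"
    using peq_append[OF peq_complement[OF _ _ cab cba] peq_refl] "4.prems"(2,3) by simp
  also have "peq n (b # u' @ q1 @ p2) (b # q @ u1 @ p2)"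
    using peq_in_context[OF IH1(1), of "[b]" p2] by simp
  finally show ?case
    using p' IH1 IH2 by simp
qed auto

definition factors_through_complement ::
  "nat \<Rightarrow> letter \<Rightarrow> letter list \<Rightarrow> letter \<Rightarrow> letter list \<Rightarrow> bool" where
  "factors_through_complement n a A b B \<longleftrightarrow>
     (\<exists>u u' Z. complement a b = Some u \<and> complement b a = Some u'
        \<and> peq n A (u @ Z) \<and> peq n B (u' @ Z))"

definition factorization_below :: "nat \<Rightarrow> nat \<Rightarrow> bool" where
  "factorization_below n L \<longleftrightarrow>
     (\<forall>a A b B. length A < L \<longrightarrow> pword n (a # A) \<longrightarrow> pword n (b # B)
        \<longrightarrow> peq n (a # A) (b # B) \<longrightarrow> factors_through_complement n a A b B)"

lemma right_reverse_complete:
  assumes "factorization_below n L" and "right_reverse f p q \<noteq> Out_of_fuel"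
    and "pword n (p @ Z1)" "pword n (q @ Z2)" "length (p @ Z1) \<le> L"
    and "peq n (p @ Z1) (q @ Z2)"
  shows "\<exists>q' p' Z. right_reverse f p q = Reversed q' p' \<and> peq n Z1 (q' @ Z) \<and> peq n Z2 (p' @ Z)"
  using assms(2-)
proof (induction f p q arbitrary: Z1 Z2 rule: right_reverse.induct)
  case (2 f q)
  then show ?case
    by (intro exI[of _ q] exI[of _ "[]"] exI[of _ Z2]) simp
next
  case (3 f c p)
  then show ?case
    by (intro exI[of _ "[]"] exI[of _ "c # p"] exI[of _ Z1]) (simp add: peq_sym)
next
  case (4 f a p b q)
  have "factors_through_complement n a (p @ Z1) b (q @ Z2)"
    using assms(1) "4.prems" unfolding factorization_below_def by auto
  then obtain u u' Y where cab: "complement a b = Some u" and cba: "complement b a = Some u'"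
    and Y: "peq n (p @ Z1) (u @ Y)" "peq n (q @ Z2) (u' @ Y)"
    unfolding factors_through_complement_def by blast
  have "right_reverse f u' q \<noteq> Out_of_fuel"
    using "4.prems"(1) cab cba by (auto split: reversal.splits)
  moreover have "pword n (u' @ Y)" "length (u' @ Y) \<le> L"
    using peq_pword[OF Y(2)] peq_length[OF Y(2)] peq_length[OF "4.prems"(5)] "4.prems"(3,4) by auto
  ultimately obtain q1 u1 W where r1: "right_reverse f u' q = Reversed q1 u1"
    and W: "peq n Y (q1 @ W)" "peq n Z2 (u1 @ W)"
    using "4.IH"(1)[OF _ cab cba, of Y Z2] "4.prems"(3) peq_sym[OF Y(2)] by auto
  have "right_reverse f p (u @ q1) \<noteq> Out_of_fuel"
    using "4.prems"(1) cab cba r1 by (auto split: reversal.splits)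
  moreover have "peq n (p @ Z1) ((u @ q1) @ W)"
    using peq_trans[OF Y(1) peq_append[OF peq_refl W(1)]] by simp
  moreover have "pword n ((u @ q1) @ W)"
    using peq_pword[OF calculation(2)] "4.prems"(2) by simp
  ultimately obtain q2 p2 V where r2: "right_reverse f p (u @ q1) = Reversed q2 p2"
    and V: "peq n Z1 (q2 @ V)" "peq n W (p2 @ V)"
    using "4.IH"(2)[OF _ cab cba r1, of Z1 W] "4.prems"(2,4) by auto
  have "peq n Z2 ((u1 @ p2) @ V)"
    using peq_trans[OF W(2) peq_append[OF peq_refl V(2)]] by simp
  then show ?case
    using cab cba r1 r2 V(1) by auto
qed simp

section \<open>The cube condition\<close>

(* With c uca = a uac and c ucb = b ubc: when uca^-1 ucb reverses to q p^-1, the word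
   a uac q = c uca q = c ucb p = b ubc p must factor through the complement of a and b, as
   witnessed by reversing. *)
definition cube_condition :: "nat \<Rightarrow> letter \<Rightarrow> letter \<Rightarrow> letter \<Rightarrow> bool" where
  "cube_condition f a b c \<longleftrightarrow>
     (case (complement c a, complement c b, complement a c, complement b c) of
        (Some uca, Some ucb, Some uac, Some ubc) \<Rightarrow>
          (case right_reverse f uca ucb of
             Reversed q p \<Rightarrow>
               (case (complement a b, complement b a) of
                  (Some u, Some u') \<Rightarrow>
                    (case right_reverse f u (uac @ q) of
                       Reversed t r \<Rightarrow> r = [] \<and> right_reverse f (ubc @ p) (u' @ t) = Reversed [] []
                     | _ \<Rightarrow> False)
                | _ \<Rightarrow> False)
           | Clash \<Rightarrow> True
           | Out_of_fuel \<Rightarrow> False)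
      | _ \<Rightarrow> True)"

(* Only the adjacency pattern of the three indices matters, so simp decides every case with
   the indices left symbolic. *)
lemma cube_condition_letters: "cube_condition 6 a b c"
  by (cases a; cases b; cases c)
    (simp_all add: cube_condition_def adjacent_def numeral_eq_Suc split: if_splits)

lemma factors_through_complement_cube:
  assumes H: "factorization_below n L" and cube: "cube_condition f a b c"
    and valid: "valid_letter n a" "valid_letter n b" "valid_letter n c"
    and cca: "complement c a = Some uca" and ccb: "complement c b = Some ucb"
    and cac: "complement a c = Some uac" and cbc: "complement b c = Some ubc"
    and Z: "pword n Z1" "pword n Z2" "length (uca @ Z1) \<le> L" "peq n (uca @ Z1) (ucb @ Z2)"
  shows "factors_through_complement n a (uac @ Z1) b (ubc @ Z2)"
proof -
  have pw: "pword n uca" "pword n ucb" "pword n uac" "pword n ubc"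
    using pword_complement valid cca ccb cac cbc by blast+
  have fuel: "right_reverse f uca ucb \<noteq> Out_of_fuel"
    using cube cca ccb cac cbc unfolding cube_condition_def by (auto split: reversal.splits)
  obtain q p Z0 where r: "right_reverse f uca ucb = Reversed q p"
    and Z0: "peq n Z1 (q @ Z0)" "peq n Z2 (p @ Z0)"
    using right_reverse_complete[OF H fuel _ _ Z(3,4)] pw Z(1,2) by auto
  have qp: "pword n q" "pword n p"
    using right_reverse_sound[OF r] pw by auto
  obtain u u' t where cab: "complement a b = Some u" and cba: "complement b a = Some u'"
    and r1: "right_reverse f u (uac @ q) = Reversed t []"
    and r2: "right_reverse f (ubc @ p) (u' @ t) = Reversed [] []"
    using cube cca ccb cac cbc r unfolding cube_condition_def
    by (auto split: option.splits reversal.splits)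
  have u: "pword n u" "pword n u'"
    using pword_complement valid cab cba by blast+
  have ut: "peq n (u @ t) (uac @ q)" "pword n t"
    using right_reverse_sound[OF r1] u pw qp by auto
  have u't: "peq n (ubc @ p) (u' @ t)"
    using right_reverse_sound[OF r2] u pw qp ut by auto
  have "peq n (uac @ Z1) (uac @ q @ Z0)"
    using peq_append[OF peq_refl Z0(1)] .
  also have "peq n (uac @ q @ Z0) (u @ t @ Z0)"
    using peq_append[OF peq_sym[OF ut(1)] peq_refl] by simp
  finally have A: "peq n (uac @ Z1) (u @ t @ Z0)" .
  have "peq n (ubc @ Z2) (ubc @ p @ Z0)"
    using peq_append[OF peq_refl Z0(2)] .
  also have "peq n (ubc @ p @ Z0) (u' @ t @ Z0)"
    using peq_append[OF u't peq_refl] by simp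
  finally have B: "peq n (ubc @ Z2) (u' @ t @ Z0)" .
  show ?thesis
    unfolding factors_through_complement_def using cab cba A B by blast
qed

lemma factors_through_complement_trans:
  assumes H: "factorization_below n L" and "length C \<le> L" and "pword n C"
    and valid: "valid_letter n a" "valid_letter n b" "valid_letter n c"
    and ac: "factors_through_complement n a A c C" and cb: "factors_through_complement n c C b B"
  shows "factors_through_complement n a A b B"
proof -
  obtain uac uca Z1 where cac: "complement a c = Some uac" and cca: "complement c a = Some uca"
    and A: "peq n A (uac @ Z1)" and C1: "peq n C (uca @ Z1)"
    using ac unfolding factors_through_complement_def by blast
  obtain ucb ubc Z2 where ccb: "complement c b = Some ucb" and cbc: "complement b c = Some ubc"
    and C2: "peq n C (ucb @ Z2)" and B: "peq n B (ubc @ Z2)"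
    using cb unfolding factors_through_complement_def by blast
  have "pword n Z1" "pword n Z2" "length (uca @ Z1) \<le> L"
    using peq_pword[OF C1] peq_pword[OF C2] peq_length[OF C1] assms(2,3) by auto
  moreover have "peq n (uca @ Z1) (ucb @ Z2)"
    using peq_trans[OF peq_sym[OF C1] C2] .
  ultimately have "factors_through_complement n a (uac @ Z1) b (ubc @ Z2)"
    using factors_through_complement_cube[OF H cube_condition_letters valid cca ccb cac cbc] by blast
  then show ?thesis
    using peq_trans[OF A] peq_trans[OF B] unfolding factors_through_complement_def by blast
qed

section \<open>Factorization through the complement\<close>

lemma factors_through_complement_refl: "factors_through_complement n a A a A"
  unfolding factors_through_complement_def by (intro exI[of _ "[]"] exI[of _ A]) simp

lemma factors_through_complement_sym:
  "factors_through_complement n a A b B \<Longrightarrow> factors_through_complement n b B a A"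
  unfolding factors_through_complement_def by blast

lemma step_factors_through_complement:
  assumes "(a # A, b # B) \<in> step n"
  shows "factors_through_complement n a A b B"
proof -
  obtain u l r v where e: "a # A = u @ l @ v" "b # B = u @ r @ v" and lr: "(l, r) \<in> rels n"
    using assms unfolding step_def by blast
  show ?thesis
  proof (cases u)
    case Nil
    obtain c d l' r' where "l = c # l'" "r = d # r'"
      and "complement c d = Some l'" "complement d c = Some r'"
      using rels_complement[OF lr] by blast
    with e Nil show ?thesis
      unfolding factors_through_complement_def by (intro exI[of _ l'] exI[of _ r'] exI[of _ v]) auto
  next
    case (Cons w u')
    with e have "a = b" "A = u' @ l @ v" "B = u' @ r @ v"
      by auto
    with peq_in_context[OF rels_imp_peq[OF lr]] show ?thesis
      unfolding factors_through_complement_def by (intro exI[of _ "[]"] exI[of _ B]) auto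
  qed
qed

lemma factors_through_complement_length_eq:
  assumes H: "factorization_below n L" and "length A = L" and "pword n (a # A)"
    and "peq n (a # A) W" and "W = c # C"
  shows "factors_through_complement n a A c C"
  using assms(4,5) unfolding peq_eq_equivclp
proof (induction arbitrary: c C rule: equivclp_induct)
  case base
  then show ?case
    using factors_through_complement_refl by blast
next
  case (step Y W)
  have pY: "peq n (a # A) Y" and pW: "peq n (a # A) W"
    using step(1) equivclp_into_equivclp[OF step(1,2)] by (simp_all add: peq_eq_equivclp)
  obtain d D where Y: "Y = d # D"
    using peq_length[OF pY] by (cases Y) auto
  have dc: "factors_through_complement n d D c C"
    using step(2) step_factors_through_complement factors_through_complement_sym
    unfolding Y \<open>W = c # C\<close> by blast
  have "pword n (d # D)" "pword n (c # C)" "length D \<le> L"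
    using peq_pword[OF pY] peq_pword[OF pW] peq_length[OF pY] assms(2,3) Y \<open>W = c # C\<close>
    by auto
  then show ?case
    using factors_through_complement_trans[OF H _ _ _ _ _ step(3)[OF Y] dc] assms(3) by simp
qed

lemma factorization_below_Suc:
  assumes H: "factorization_below n L"
  shows "factorization_below n (Suc L)"
  unfolding factorization_below_def
proof (intro allI impI)
  fix a A b B
  assume "length A < Suc L" "pword n (a # A)" "pword n (b # B)" and e: "peq n (a # A) (b # B)"
  show "factors_through_complement n a A b B"
  proof (cases "length A = L")
    case True
    show ?thesis
      using factors_through_complement_length_eq[OF H True \<open>pword n (a # A)\<close> e refl] .
  next
    case False
    with \<open>length A < Suc L\<close> have "length A < L"
      by simp
    with H \<open>pword n (a # A)\<close> \<open>pword n (b # B)\<close> e show ?thesis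
      unfolding factorization_below_def by blast
  qed
qed

lemma factorization_below: "factorization_below n L"
proof (induction L)
  case 0
  then show ?case
    by (simp add: factorization_below_def)
next
  case (Suc L)
  then show ?case
    by (rule factorization_below_Suc)
qed

lemma peq_Cons_factors_through_complement:
  assumes "pword n (a # A)" "pword n (b # B)" "peq n (a # A) (b # B)"
  shows "factors_through_complement n a A b B"
  using factorization_below[of n "Suc (length A)"] assms unfolding factorization_below_def by blast

lemma peq_Cons_complement_factor:
  assumes "pword n (a # A)" "pword n (b # B)" "peq n (a # A) (b # B)"
    and "complement a b = Some u" "complement b a = Some u'"
  shows "\<exists>Z. pword n Z \<and> peq n A (u @ Z) \<and> peq n B (u' @ Z)"
proof -
  obtain Z where "peq n A (u @ Z)" "peq n B (u' @ Z)"
    using peq_Cons_factors_through_complement[OF assms(1-3)] assms(4,5)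
    unfolding factors_through_complement_def by auto
  moreover have "pword n Z"
    using peq_pword[OF \<open>peq n A (u @ Z)\<close>] assms(1) by simp
  ultimately show ?thesis
    by blast
qed

lemma peq_Cons_no_complement:
  assumes "pword n (a # A)" "pword n (b # B)" "complement a b = None"
  shows "\<not> peq n (a # A) (b # B)"
  using peq_Cons_factors_through_complement[of n a A b B] assms
  unfolding factors_through_complement_def by auto

lemma peq_Cons_cancel:
  assumes "pword n (a # A)" "pword n (a # B)" "peq n (a # A) (a # B)"
  shows "peq n A B"
proof -
  obtain Z where "peq n A Z" "peq n B Z"
    using peq_Cons_complement_factor[OF assms complement_self complement_self] by auto
  then show ?thesis
    using peq_trans[OF _ peq_sym] by blast
qed

lemma peq_snoc_iff_Cons_rev: "peq n (A @ [a]) (B @ [b]) \<longleftrightarrow> peq n (a # rev A) (b # rev B)"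
  using peq_rev[of n "A @ [a]" "B @ [b]"] peq_rev[of n "a # rev A" "b # rev B"] by auto

lemma peq_snoc_complement_factor:
  assumes "pword n (A @ [a])" "pword n (B @ [b])" "peq n (A @ [a]) (B @ [b])"
    and "complement a b = Some u" "complement b a = Some u'"
  shows "\<exists>Z. pword n Z \<and> peq n A (Z @ rev u) \<and> peq n B (Z @ rev u')"
proof -
  obtain Z where "pword n Z" "peq n (rev A) (u @ Z)" "peq n (rev B) (u' @ Z)"
    using peq_Cons_complement_factor[of n a "rev A" b "rev B"] assms
    by (auto simp: peq_snoc_iff_Cons_rev)
  then have "peq n A (rev Z @ rev u)" "peq n B (rev Z @ rev u')"
    using peq_rev by fastforce+
  with \<open>pword n Z\<close> show ?thesis
    by (intro exI[of _ "rev Z"]) simp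
qed

lemma peq_snoc_no_complement:
  assumes "pword n (A @ [a])" "pword n (B @ [b])" "complement a b = None"
  shows "\<not> peq n (A @ [a]) (B @ [b])"
  using peq_Cons_no_complement[of n a "rev A" b "rev B"] assms
  by (simp add: peq_snoc_iff_Cons_rev)

lemma peq_snoc_cancel:
  assumes "pword n (A @ [a])" "pword n (B @ [a])" "peq n (A @ [a]) (B @ [a])"
  shows "peq n A B"
  using peq_Cons_cancel[of n a "rev A" "rev B"] peq_rev[of n "rev A" "rev B"] assms
  by (simp add: peq_snoc_iff_Cons_rev)

theorem proposition2p1:
  fixes n i k :: nat and A B :: "letter list"
  assumes "n \<ge> 2" and "pword n A" and "pword n B"
    and "1 \<le> i" and "i < n" and "1 \<le> k" and "k < n"
  shows
   \<comment> \<open>(1) left\<close>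
   "(peq n (S i # A) (S k # B) \<longrightarrow>
       (k = i \<longrightarrow> peq n A B)
     \<and> (\<bar>int k - int i\<bar> = 1 \<longrightarrow> (\<exists>Z. pword n Z \<and> peq n A ([S k, S i] @ Z) \<and> peq n B ([S i, S k] @ Z)))
     \<and> (\<bar>int k - int i\<bar> \<ge> 2 \<longrightarrow> (\<exists>Z. pword n Z \<and> peq n A (S k # Z) \<and> peq n B (S i # Z))))
  \<and> \<comment> \<open>(2) left\<close>
    (peq n (S i # A) (X k # B) \<longrightarrow>
       (\<bar>int k - int i\<bar> = 1 \<longrightarrow> (\<exists>Z. pword n Z \<and> peq n A ([S k, X i] @ Z) \<and> peq n B ([S i, S k] @ Z)))
     \<and> (\<bar>int k - int i\<bar> \<noteq> 1 \<longrightarrow> (\<exists>Z. pword n Z \<and> peq n A (X k # Z) \<and> peq n B (S i # Z))))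
  \<and> \<comment> \<open>(3) left\<close>
    (peq n (X i # A) (X k # B) \<longrightarrow>
       (k = i \<longrightarrow> peq n A B)
     \<and> (\<bar>int k - int i\<bar> \<ge> 2 \<longrightarrow> (\<exists>Z. pword n Z \<and> peq n A (X k # Z) \<and> peq n B (X i # Z))))
  \<and> (\<bar>int k - int i\<bar> = 1 \<longrightarrow> \<not> peq n (X i # A) (X k # B))
  \<and> \<comment> \<open>(1) right\<close>
    (peq n (A @ [S i]) (B @ [S k]) \<longrightarrow>
       (k = i \<longrightarrow> peq n A B)
     \<and> (\<bar>int k - int i\<bar> = 1 \<longrightarrow> (\<exists>Z. pword n Z \<and> peq n A (Z @ [S i, S k]) \<and> peq n B (Z @ [S k, S i])))
     \<and> (\<bar>int k - int i\<bar> \<ge> 2 \<longrightarrow> (\<exists>Z. pword n Z \<and> peq n A (Z @ [S k]) \<and> peq n B (Z @ [S i]))))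
  \<and> \<comment> \<open>(2) right\<close>
    (peq n (A @ [S i]) (B @ [X k]) \<longrightarrow>
       (\<bar>int k - int i\<bar> = 1 \<longrightarrow> (\<exists>Z. pword n Z \<and> peq n A (Z @ [X i, S k]) \<and> peq n B (Z @ [S k, S i])))
     \<and> (\<bar>int k - int i\<bar> \<noteq> 1 \<longrightarrow> (\<exists>Z. pword n Z \<and> peq n A (Z @ [X k]) \<and> peq n B (Z @ [S i]))))
  \<and> \<comment> \<open>(3) right\<close>
    (peq n (A @ [X i]) (B @ [X k]) \<longrightarrow>
       (k = i \<longrightarrow> peq n A B)
     \<and> (\<bar>int k - int i\<bar> \<ge> 2 \<longrightarrow> (\<exists>Z. pword n Z \<and> peq n A (Z @ [X k]) \<and> peq n B (Z @ [X i]))))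
  \<and> (\<bar>int k - int i\<bar> = 1 \<longrightarrow> \<not> peq n (A @ [X i]) (B @ [X k]))"
proof -
  have valid:
    "valid_letter n (S i)" "valid_letter n (S k)" "valid_letter n (X i)" "valid_letter n (X k)"
    using assms by (auto simp: valid_letter_def)
  have distance: "\<bar>int k - int i\<bar> = 1 \<longleftrightarrow> adjacent i k"
    "\<bar>int k - int i\<bar> \<ge> 2 \<longleftrightarrow> \<not> adjacent i k \<and> i \<noteq> k"
    by (auto simp: adjacent_def)
  note L = peq_Cons_complement_factor[where A = A and B = B]
    and R = peq_snoc_complement_factor[where A = A and B = B]
  show ?thesis
    unfolding distance using assms(2,3) valid
    apply (intro conjI impI)
    subgoal using peq_Cons_cancel[of n "S i" A B] by simp
    subgoal using L[of n "S i" "S k" "[S k, S i]" "[S i, S k]"] by (auto simp: adjacent_def)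
    subgoal using L[of n "S i" "S k" "[S k]" "[S i]"] by (auto simp: adjacent_def)
    subgoal using L[of n "S i" "X k" "[S k, X i]" "[S i, S k]"] by (auto simp: adjacent_def)
    subgoal using L[of n "S i" "X k" "[X k]" "[S i]"] by (auto simp: adjacent_def)
    subgoal using peq_Cons_cancel[of n "X i" A B] by simp
    subgoal using L[of n "X i" "X k" "[X k]" "[X i]"] by (auto simp: adjacent_def)
    subgoal using peq_Cons_no_complement[of n "X i" A "X k" B] by (auto simp: adjacent_def)
    subgoal using peq_snoc_cancel[of n A "S i" B] by simp
    subgoal using R[of n "S i" "S k" "[S k, S i]" "[S i, S k]"] by (auto simp: adjacent_def)
    subgoal using R[of n "S i" "S k" "[S k]" "[S i]"] by (auto simp: adjacent_def)
    subgoal using R[of n "S i" "X k" "[S k, X i]" "[S i, S k]"] by (auto simp: adjacent_def)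
    subgoal using R[of n "S i" "X k" "[X k]" "[S i]"] by (auto simp: adjacent_def)
    subgoal using peq_snoc_cancel[of n A "X i" B] by simp
    subgoal using R[of n "X i" "X k" "[X k]" "[X i]"] by (auto simp: adjacent_def)
    subgoal using peq_snoc_no_complement[of n A "X i" B "X k"] by (auto simp: adjacent_def)
    done
qed

end
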